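(* Let $\Phi$ be a potential-inner automorphism of $\mathcal C$, witnessed by bijections $s_A:A\to\Phi(A)$ with $\Phi(\mu)=s_B\circ\mu\circ s_A^{-1}$ for all morphisms $\mu:A\to B$ of $\mathcal C$. For each object $A$, let $A^*$ denote the algebra on the underlying set of $\Phi(A)$ obtained by transporting the structure of $A$ along $s_A$, so that $s_A:A\to A^*$ is an isomorphism. Then $\Phi$ is inner if and only if there exists a central function $A\mapsto c_A$ on $\mathcal C$ such that, for every object $A$, the map $c_{\Phi(A)}$ is an isomorphism of the algebra $\Phi(A)$ onto the algebra $A^*$.
   Context: Let $\mathcal V$ be a variety of universal algebras, and let $\mathcal C$ be a full subcategory of the category $\Theta(\mathcal V)$ of all $\mathcal V$-algebras and homomorphisms, containing a free $\mathcal V$-algebra on one generator. An automorphism $\Phi$ of $\mathcal C$ is potential-inner if there are bijections of underlying sets $s_A:A\to\Phi(A)$ with $\Phi(\mu)=s_B\circ\mu\circ s_A^{-1}$ for every morphism $\mu:A\to B$. It is inner if such $s_A$ can be chosen to be algebra isomorphisms. A central function on $\mathcal C$ assigns to every object $A$ a permutation $c_A$ of its underlying set such that $c_B\circ\nu\circ c_A^{-1}=\nu$ for every morphism $\nu:A\to B$ of $\mathcal C$. *)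

theory Defs
  imports Main "HOL-Library.FuncSet"
begin

text \<open>An algebra of signature 'f (with arities given separately) whose elements live in the
universe type 'u: an underlying set and an interpretation of each operation symbol.\<close>
record ('f, 'u) ualg =
  ucarrier :: "'u set"
  uops :: "'f \<Rightarrow> 'u list \<Rightarrow> 'u"

definition is_alg :: "('f \<Rightarrow> nat) \<Rightarrow> ('f, 'u) ualg \<Rightarrow> bool" where
  "is_alg ar A \<longleftrightarrow>
     (\<forall>f xs. length xs = ar f \<longrightarrow> set xs \<subseteq> ucarrier A \<longrightarrow> uops A f xs \<in> ucarrier A)"

datatype 'f trm = Var nat | Op 'f "'f trm list"

fun wf_trm :: "('f \<Rightarrow> nat) \<Rightarrow> 'f trm \<Rightarrow> bool" where
  "wf_trm ar (Var n) = True"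
| "wf_trm ar (Op f ts) = (length ts = ar f \<and> (\<forall>t\<in>set ts. wf_trm ar t))"

fun eval_trm :: "('f, 'u) ualg \<Rightarrow> (nat \<Rightarrow> 'u) \<Rightarrow> 'f trm \<Rightarrow> 'u" where
  "eval_trm A \<rho> (Var n) = \<rho> n"
| "eval_trm A \<rho> (Op f ts) = uops A f (map (eval_trm A \<rho>) ts)"

definition in_variety ::
  "('f \<Rightarrow> nat) \<Rightarrow> ('f trm \<times> 'f trm) set \<Rightarrow> ('f, 'u) ualg \<Rightarrow> bool" where
  "in_variety ar E A \<longleftrightarrow> is_alg ar A \<and>
     (\<forall>(l, r)\<in>E. \<forall>\<rho>. (\<forall>n. \<rho> n \<in> ucarrier A) \<longrightarrow> eval_trm A \<rho> l = eval_trm A \<rho> r)"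

definition hom :: "('f \<Rightarrow> nat) \<Rightarrow> ('f, 'u) ualg \<Rightarrow> ('f, 'u) ualg \<Rightarrow> ('u \<Rightarrow> 'u) set" where
  "hom ar A B = {h. (\<forall>x\<in>ucarrier A. h x \<in> ucarrier B) \<and>
     (\<forall>f xs. length xs = ar f \<longrightarrow> set xs \<subseteq> ucarrier A \<longrightarrow>
        h (uops A f xs) = uops B f (map h xs))}"

definition iso :: "('f \<Rightarrow> nat) \<Rightarrow> ('f, 'u) ualg \<Rightarrow> ('f, 'u) ualg \<Rightarrow> ('u \<Rightarrow> 'u) set" where
  "iso ar A B = {h. h \<in> hom ar A B \<and> bij_betw h (ucarrier A) (ucarrier B)}"

text \<open>Morphisms of the category: homomorphisms, represented extensionally on the domain.\<close>
definition Hom :: "('f \<Rightarrow> nat) \<Rightarrow> ('f, 'u) ualg \<Rightarrow> ('f, 'u) ualg \<Rightarrow> ('u \<Rightarrow> 'u) set" where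
  "Hom ar A B = hom ar A B \<inter> extensional (ucarrier A)"

definition free_on_one ::
  "('f \<Rightarrow> nat) \<Rightarrow> ('f trm \<times> 'f trm) set \<Rightarrow> ('f, 'u) ualg \<Rightarrow> 'u \<Rightarrow> bool" where
  "free_on_one ar E F x \<longleftrightarrow> in_variety ar E F \<and> x \<in> ucarrier F \<and>
     (\<forall>B. in_variety ar E B \<longrightarrow> (\<forall>b\<in>ucarrier B. \<exists>!h. h \<in> Hom ar F B \<and> h x = b))"

text \<open>A full subcategory of Theta(V) is given by its set of objects Obj.
An automorphism is given by an object map Fo and morphism maps Fm A B.\<close>
definition is_automorphism ::
  "('f \<Rightarrow> nat) \<Rightarrow> ('f, 'u) ualg set \<Rightarrow> (('f, 'u) ualg \<Rightarrow> ('f, 'u) ualg)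
   \<Rightarrow> (('f, 'u) ualg \<Rightarrow> ('f, 'u) ualg \<Rightarrow> ('u \<Rightarrow> 'u) \<Rightarrow> ('u \<Rightarrow> 'u)) \<Rightarrow> bool" where
  "is_automorphism ar Obj Fo Fm \<longleftrightarrow>
     bij_betw Fo Obj Obj \<and>
     (\<forall>A\<in>Obj. \<forall>B\<in>Obj. bij_betw (Fm A B) (Hom ar A B) (Hom ar (Fo A) (Fo B))) \<and>
     (\<forall>A\<in>Obj. Fm A A (restrict id (ucarrier A)) = restrict id (ucarrier (Fo A))) \<and>
     (\<forall>A\<in>Obj. \<forall>B\<in>Obj. \<forall>C\<in>Obj. \<forall>f\<in>Hom ar A B. \<forall>g\<in>Hom ar B C.
        Fm A C (compose (ucarrier A) g f) = compose (ucarrier (Fo A)) (Fm B C g) (Fm A B f))"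

definition implements ::
  "('f \<Rightarrow> nat) \<Rightarrow> ('f, 'u) ualg set \<Rightarrow> (('f, 'u) ualg \<Rightarrow> ('f, 'u) ualg)
   \<Rightarrow> (('f, 'u) ualg \<Rightarrow> ('f, 'u) ualg \<Rightarrow> ('u \<Rightarrow> 'u) \<Rightarrow> ('u \<Rightarrow> 'u))
   \<Rightarrow> (('f, 'u) ualg \<Rightarrow> 'u \<Rightarrow> 'u) \<Rightarrow> bool" where
  "implements ar Obj Fo Fm s \<longleftrightarrow>
     (\<forall>A\<in>Obj. bij_betw (s A) (ucarrier A) (ucarrier (Fo A))) \<and>
     (\<forall>A\<in>Obj. \<forall>B\<in>Obj. \<forall>\<mu>\<in>Hom ar A B. \<forall>y\<in>ucarrier (Fo A).
        Fm A B \<mu> y = s B (\<mu> (inv_into (ucarrier A) (s A) y)))"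

definition potential_inner ::
  "('f \<Rightarrow> nat) \<Rightarrow> ('f, 'u) ualg set \<Rightarrow> (('f, 'u) ualg \<Rightarrow> ('f, 'u) ualg)
   \<Rightarrow> (('f, 'u) ualg \<Rightarrow> ('f, 'u) ualg \<Rightarrow> ('u \<Rightarrow> 'u) \<Rightarrow> ('u \<Rightarrow> 'u)) \<Rightarrow> bool" where
  "potential_inner ar Obj Fo Fm \<longleftrightarrow> (\<exists>s. implements ar Obj Fo Fm s)"

definition inner ::
  "('f \<Rightarrow> nat) \<Rightarrow> ('f, 'u) ualg set \<Rightarrow> (('f, 'u) ualg \<Rightarrow> ('f, 'u) ualg)
   \<Rightarrow> (('f, 'u) ualg \<Rightarrow> ('f, 'u) ualg \<Rightarrow> ('u \<Rightarrow> 'u) \<Rightarrow> ('u \<Rightarrow> 'u)) \<Rightarrow> bool" where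
  "inner ar Obj Fo Fm \<longleftrightarrow>
     (\<exists>s. implements ar Obj Fo Fm s \<and> (\<forall>A\<in>Obj. s A \<in> iso ar A (Fo A)))"

definition central_function ::
  "('f \<Rightarrow> nat) \<Rightarrow> ('f, 'u) ualg set \<Rightarrow> (('f, 'u) ualg \<Rightarrow> 'u \<Rightarrow> 'u) \<Rightarrow> bool" where
  "central_function ar Obj c \<longleftrightarrow>
     (\<forall>A\<in>Obj. bij_betw (c A) (ucarrier A) (ucarrier A)) \<and>
     (\<forall>A\<in>Obj. \<forall>B\<in>Obj. \<forall>\<nu>\<in>Hom ar A B. \<forall>x\<in>ucarrier A.
        c B (\<nu> (inv_into (ucarrier A) (c A) x)) = \<nu> x)"

definition transport :: "('f, 'u) ualg \<Rightarrow> ('u \<Rightarrow> 'u) \<Rightarrow> ('f, 'u) ualg" where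
  "transport A s = \<lparr>ucarrier = s ` ucarrier A,
     uops = (\<lambda>f xs. s (uops A f (map (inv_into (ucarrier A) s) xs)))\<rparr>"

end

theory Submission
  imports Defs
begin

text \<open>Any two families of bijections implementing \<Phi> differ by a central function: if s and t
both implement \<Phi>, then c (\<Phi> A) = s A \<circ> inv (t A) is central, and conversely, for central c, the
family inv (c (\<Phi> A)) \<circ> s A implements \<Phi> as well. Since s A : A \<rightarrow> A* is an isomorphism, t A is
an isomorphism A \<rightarrow> \<Phi> A exactly when c (\<Phi> A) is an isomorphism \<Phi> A \<rightarrow> A*.\<close>

lemma Hom_mem: "h \<in> Hom ar A B \<Longrightarrow> x \<in> ucarrier A \<Longrightarrow> h x \<in> ucarrier B"
  by (auto simp: Hom_def hom_def)

lemma hom_comp: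
  assumes h: "h \<in> hom ar A B" and k: "k \<in> hom ar B C"
  shows "(\<lambda>x. k (h x)) \<in> hom ar A C"
proof -
  have "k (h (uops A f xs)) = uops C f (map (\<lambda>x. k (h x)) xs)"
    if "length xs = ar f" "set xs \<subseteq> ucarrier A" for f xs
  proof -
    have "set (map h xs) \<subseteq> ucarrier B" using that h by (auto simp: hom_def)
    then show ?thesis using that h k by (simp add: hom_def o_def)
  qed
  then show ?thesis using h k by (simp add: hom_def)
qed

lemma iso_comp:
  assumes "h \<in> iso ar A B" and "k \<in> iso ar B C"
  shows "(\<lambda>x. k (h x)) \<in> iso ar A C"
  using assms hom_comp bij_betw_trans[of h "ucarrier A" "ucarrier B" k "ucarrier C"]
  by (auto simp: iso_def comp_def)

lemma iso_inv_into:
  assumes A: "is_alg ar A" and h: "h \<in> iso ar A B"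
  shows "inv_into (ucarrier A) h \<in> iso ar B A"
proof -
  let ?g = "inv_into (ucarrier A) h"
  have bij: "bij_betw h (ucarrier A) (ucarrier B)" and hom: "h \<in> hom ar A B"
    using h by (auto simp: iso_def)
  have g_bij: "bij_betw ?g (ucarrier B) (ucarrier A)"
    using bij by (rule bij_betw_inv_into)
  have "?g (uops B f ys) = uops A f (map ?g ys)"
    if len: "length ys = ar f" and ys: "set ys \<subseteq> ucarrier B" for f ys
  proof -
    have gys: "set (map ?g ys) \<subseteq> ucarrier A"
      using ys g_bij by (auto dest: bij_betwE)
    have "h (uops A f (map ?g ys)) = uops B f (map h (map ?g ys))"
      using hom len gys by (simp add: hom_def)
    also have "map h (map ?g ys) = ys"
      using ys bij by (induction ys) (auto simp: bij_betw_inv_into_right)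
    finally have "h (uops A f (map ?g ys)) = uops B f ys" .
    moreover have "uops A f (map ?g ys) \<in> ucarrier A"
      using A len gys by (simp add: is_alg_def)
    ultimately show ?thesis
      using bij_betw_inv_into_left[OF bij] by metis
  qed
  then show ?thesis
    using g_bij by (auto simp: iso_def hom_def dest: bij_betwE)
qed

lemma iso_transport:
  assumes "inj_on s (ucarrier A)"
  shows "s \<in> iso ar A (transport A s)"
proof -
  have "map (inv_into (ucarrier A) s) (map s xs) = xs" if "set xs \<subseteq> ucarrier A" for xs
    using that assms by (induction xs) auto
  then show ?thesis
    using assms by (auto simp: iso_def hom_def transport_def bij_betw_def)
qed

lemma central_function_commute_inv:
  assumes c: "central_function ar Obj c" and "A \<in> Obj" "B \<in> Obj" and \<nu>: "\<nu> \<in> Hom ar A B"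
    and x: "x \<in> ucarrier A"
  shows "\<nu> (inv_into (ucarrier A) (c A) x) = inv_into (ucarrier B) (c B) (\<nu> x)"
proof -
  have bij_A: "bij_betw (c A) (ucarrier A) (ucarrier A)"
    and bij: "bij_betw (c B) (ucarrier B) (ucarrier B)"
    using c \<open>A \<in> Obj\<close> \<open>B \<in> Obj\<close> by (simp_all add: central_function_def)
  have "c B (\<nu> (inv_into (ucarrier A) (c A) x)) = \<nu> x"
    using assms by (simp add: central_function_def)
  moreover have "\<nu> (inv_into (ucarrier A) (c A) x) \<in> ucarrier B"
    using Hom_mem[OF \<nu>] bij_betwE[OF bij_betw_inv_into[OF bij_A]] x by blast
  ultimately show ?thesis
    using bij_betw_inv_into_left[OF bij] by metis
qed

lemma central_functionI:
  assumes bij: "\<And>A. A \<in> Obj \<Longrightarrow> bij_betw (c A) (ucarrier A) (ucarrier A)"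
    and commute: "\<And>A B \<nu> x. A \<in> Obj \<Longrightarrow> B \<in> Obj \<Longrightarrow> \<nu> \<in> Hom ar A B \<Longrightarrow> x \<in> ucarrier A \<Longrightarrow>
      c B (\<nu> x) = \<nu> (c A x)"
  shows "central_function ar Obj c"
proof -
  have "c B (\<nu> (inv_into (ucarrier A) (c A) x)) = \<nu> x"
    if "A \<in> Obj" "B \<in> Obj" "\<nu> \<in> Hom ar A B" "x \<in> ucarrier A" for A B \<nu> x
  proof -
    have "inv_into (ucarrier A) (c A) x \<in> ucarrier A"
      using bij_betwE[OF bij_betw_inv_into[OF bij]] that by blast
    then show ?thesis
      using commute that bij_betw_inv_into_right[OF bij] by simp
  qed
  then show ?thesis
    using bij by (simp add: central_function_def)
qed

lemma implements_naturality:
  assumes s: "implements ar Obj Fo Fm s" and "A \<in> Obj" "B \<in> Obj" "\<mu> \<in> Hom ar A B"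
    and z: "z \<in> ucarrier A"
  shows "Fm A B \<mu> (s A z) = s B (\<mu> z)"
proof -
  have bij: "bij_betw (s A) (ucarrier A) (ucarrier (Fo A))"
    using s \<open>A \<in> Obj\<close> by (simp add: implements_def)
  have "Fm A B \<mu> (s A z) = s B (\<mu> (inv_into (ucarrier A) (s A) (s A z)))"
    using assms bij_betwE[OF bij] by (simp add: implements_def)
  then show ?thesis
    using bij_betw_inv_into_left[OF bij z] by simp
qed

lemma implementsI:
  assumes bij: "\<And>A. A \<in> Obj \<Longrightarrow> bij_betw (s A) (ucarrier A) (ucarrier (Fo A))"
    and natural: "\<And>A B \<mu> z. A \<in> Obj \<Longrightarrow> B \<in> Obj \<Longrightarrow> \<mu> \<in> Hom ar A B \<Longrightarrow> z \<in> ucarrier A \<Longrightarrow>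
      Fm A B \<mu> (s A z) = s B (\<mu> z)"
  shows "implements ar Obj Fo Fm s"
proof -
  have "Fm A B \<mu> y = s B (\<mu> (inv_into (ucarrier A) (s A) y))"
    if "A \<in> Obj" "B \<in> Obj" "\<mu> \<in> Hom ar A B" "y \<in> ucarrier (Fo A)" for A B \<mu> y
  proof -
    have "inv_into (ucarrier A) (s A) y \<in> ucarrier A"
      using bij_betwE[OF bij_betw_inv_into[OF bij]] that by blast
    then show ?thesis
      using natural[of A B \<mu>] that bij_betw_inv_into_right[OF bij] by metis
  qed
  then show ?thesis
    using bij by (simp add: implements_def)
qed

lemma automorphism_obj:
  assumes "is_automorphism ar Obj Fo Fm" and "A \<in> Obj"
  shows "Fo A \<in> Obj"
  using assms by (auto simp: is_automorphism_def dest: bij_betwE)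

lemma automorphism_obj_cases:
  assumes "is_automorphism ar Obj Fo Fm" and "X \<in> Obj"
  obtains A where "A \<in> Obj" and "X = Fo A"
proof -
  have "X \<in> Fo ` Obj"
    using assms by (simp add: is_automorphism_def bij_betw_def)
  then show ?thesis
    using that by blast
qed

lemma automorphism_Hom:
  assumes "is_automorphism ar Obj Fo Fm" and "A \<in> Obj" "B \<in> Obj" "\<mu> \<in> Hom ar A B"
  shows "Fm A B \<mu> \<in> Hom ar (Fo A) (Fo B)"
  using assms by (auto simp: is_automorphism_def dest: bij_betwE)

lemma automorphism_Hom_cases:
  assumes "is_automorphism ar Obj Fo Fm" and "A \<in> Obj" "B \<in> Obj" "\<nu> \<in> Hom ar (Fo A) (Fo B)"
  obtains \<mu> where "\<mu> \<in> Hom ar A B" and "\<nu> = Fm A B \<mu>"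
proof -
  have "\<nu> \<in> Fm A B ` Hom ar A B"
    using assms by (simp add: is_automorphism_def bij_betw_def)
  then show ?thesis
    using that by blast
qed

definition implementation_ratio ::
  "('f, 'u) ualg set \<Rightarrow> (('f, 'u) ualg \<Rightarrow> ('f, 'u) ualg)
   \<Rightarrow> (('f, 'u) ualg \<Rightarrow> 'u \<Rightarrow> 'u) \<Rightarrow> (('f, 'u) ualg \<Rightarrow> 'u \<Rightarrow> 'u)
   \<Rightarrow> ('f, 'u) ualg \<Rightarrow> 'u \<Rightarrow> 'u" where
  "implementation_ratio Obj Fo s t X =
     (let A = inv_into Obj Fo X in (\<lambda>y. s A (inv_into (ucarrier A) (t A) y)))"

lemma implementation_ratio_Fo:
  assumes "is_automorphism ar Obj Fo Fm" and "A \<in> Obj"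
  shows "implementation_ratio Obj Fo s t (Fo A) = (\<lambda>y. s A (inv_into (ucarrier A) (t A) y))"
  using assms by (auto simp: implementation_ratio_def is_automorphism_def bij_betw_def)

lemma central_function_implementation_ratio:
  assumes aut: "is_automorphism ar Obj Fo Fm"
    and s: "implements ar Obj Fo Fm s" and t: "implements ar Obj Fo Fm t"
  shows "central_function ar Obj (implementation_ratio Obj Fo s t)"
proof (rule central_functionI)
  fix X assume "X \<in> Obj"
  with aut obtain A where A: "A \<in> Obj" and X: "X = Fo A"
    by (rule automorphism_obj_cases)
  have "bij_betw (inv_into (ucarrier A) (t A)) (ucarrier (Fo A)) (ucarrier A)"
    using t A by (intro bij_betw_inv_into) (simp add: implements_def)
  moreover have "bij_betw (s A) (ucarrier A) (ucarrier (Fo A))"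
    using s A by (simp add: implements_def)
  ultimately show "bij_betw (implementation_ratio Obj Fo s t X) (ucarrier X) (ucarrier X)"
    using bij_betw_trans implementation_ratio_Fo[OF aut A] X by (fastforce simp: o_def)
next
  fix X Y \<nu> y
  assume "X \<in> Obj" "Y \<in> Obj" and \<nu>: "\<nu> \<in> Hom ar X Y" and y: "y \<in> ucarrier X"
  obtain A B where A: "A \<in> Obj" "X = Fo A" and B: "B \<in> Obj" "Y = Fo B"
    using aut \<open>X \<in> Obj\<close> \<open>Y \<in> Obj\<close> by (metis automorphism_obj_cases)
  obtain \<mu> where \<mu>: "\<mu> \<in> Hom ar A B" and \<nu>_eq: "\<nu> = Fm A B \<mu>"
    using aut A B \<nu> by (metis automorphism_Hom_cases)
  have t_bij: "bij_betw (t A) (ucarrier A) (ucarrier (Fo A))"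
    using t A by (simp add: implements_def)
  define z where "z = inv_into (ucarrier A) (t A) y"
  have z: "z \<in> ucarrier A" and y_eq: "y = t A z"
    using bij_betwE[OF bij_betw_inv_into[OF t_bij]] bij_betw_inv_into_right[OF t_bij] y A
    by (auto simp: z_def)
  have t_B_bij: "bij_betw (t B) (ucarrier B) (ucarrier (Fo B))"
    using t B by (simp add: implements_def)
  have "implementation_ratio Obj Fo s t Y (\<nu> y) = s B (\<mu> z)"
    using implementation_ratio_Fo[OF aut B(1)] implements_naturality[OF t A(1) B(1) \<mu> z]
      bij_betw_inv_into_left[OF t_B_bij Hom_mem[OF \<mu> z]]
    by (simp add: B(2) \<nu>_eq y_eq)
  also have "\<dots> = \<nu> (implementation_ratio Obj Fo s t X y)"
    using implementation_ratio_Fo[OF aut A(1)] implements_naturality[OF s A(1) B(1) \<mu> z]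
    by (simp add: A(2) \<nu>_eq z_def)
  finally show "implementation_ratio Obj Fo s t Y (\<nu> y) =
      \<nu> (implementation_ratio Obj Fo s t X y)" .
qed

lemma implements_inv_central_comp:
  assumes aut: "is_automorphism ar Obj Fo Fm"
    and s: "implements ar Obj Fo Fm s" and c: "central_function ar Obj c"
  shows "implements ar Obj Fo Fm (\<lambda>A x. inv_into (ucarrier (Fo A)) (c (Fo A)) (s A x))"
proof (rule implementsI)
  fix A assume A: "A \<in> Obj"
  have "bij_betw (s A) (ucarrier A) (ucarrier (Fo A))"
    using s A by (simp add: implements_def)
  moreover have
    "bij_betw (inv_into (ucarrier (Fo A)) (c (Fo A))) (ucarrier (Fo A)) (ucarrier (Fo A))"
    using c automorphism_obj[OF aut A] by (intro bij_betw_inv_into) (simp add: central_function_def)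
  ultimately show "bij_betw (\<lambda>x. inv_into (ucarrier (Fo A)) (c (Fo A)) (s A x))
      (ucarrier A) (ucarrier (Fo A))"
    using bij_betw_trans by (fastforce simp: o_def)
next
  fix A B \<mu> z
  assume A: "A \<in> Obj" and B: "B \<in> Obj" and \<mu>: "\<mu> \<in> Hom ar A B" and z: "z \<in> ucarrier A"
  have "s A z \<in> ucarrier (Fo A)"
    using s A z by (auto simp: implements_def dest: bij_betwE)
  then show "Fm A B \<mu> (inv_into (ucarrier (Fo A)) (c (Fo A)) (s A z)) =
      inv_into (ucarrier (Fo B)) (c (Fo B)) (s B (\<mu> z))"
    using central_function_commute_inv[OF c automorphism_obj[OF aut A] automorphism_obj[OF aut B]
        automorphism_Hom[OF aut A B \<mu>]] implements_naturality[OF s A B \<mu> z]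
    by simp
qed

theorem mainTheorem3:
  fixes ar :: "'f \<Rightarrow> nat"
    and E :: "('f trm \<times> 'f trm) set"
    and Obj :: "('f, 'u) ualg set"
    and Fo :: "('f, 'u) ualg \<Rightarrow> ('f, 'u) ualg"
    and Fm :: "('f, 'u) ualg \<Rightarrow> ('f, 'u) ualg \<Rightarrow> ('u \<Rightarrow> 'u) \<Rightarrow> ('u \<Rightarrow> 'u)"
    and s :: "('f, 'u) ualg \<Rightarrow> 'u \<Rightarrow> 'u"
  assumes E_wf: "\<forall>(l, r)\<in>E. wf_trm ar l \<and> wf_trm ar r"
    and Obj_V: "\<forall>A\<in>Obj. in_variety ar E A"
    and free: "\<exists>F\<in>Obj. \<exists>x. free_on_one ar E F x"
    and aut: "is_automorphism ar Obj Fo Fm"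
    and s_impl: "implements ar Obj Fo Fm s"
  shows "inner ar Obj Fo Fm \<longleftrightarrow>
    (\<exists>c. central_function ar Obj c \<and>
       (\<forall>A\<in>Obj. c (Fo A) \<in> iso ar (Fo A) (transport A (s A))))"
proof -
  have alg: "is_alg ar A" if "A \<in> Obj" for A
    using Obj_V that by (simp add: in_variety_def)
  have s_iso: "s A \<in> iso ar A (transport A (s A))" if "A \<in> Obj" for A
    using s_impl that by (intro iso_transport) (simp add: implements_def bij_betw_def)
  show ?thesis
  proof
    assume "inner ar Obj Fo Fm"
    then obtain t where t: "implements ar Obj Fo Fm t" and t_iso: "\<forall>A\<in>Obj. t A \<in> iso ar A (Fo A)"
      by (auto simp: inner_def)
    have "implementation_ratio Obj Fo s t (Fo A) \<in> iso ar (Fo A) (transport A (s A))" if "A \<in> Obj" for A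
      using iso_comp[OF iso_inv_into[OF alg] s_iso] t_iso implementation_ratio_Fo[OF aut] that by simp
    with central_function_implementation_ratio[OF aut s_impl t]
    show "\<exists>c. central_function ar Obj c \<and> (\<forall>A\<in>Obj. c (Fo A) \<in> iso ar (Fo A) (transport A (s A)))"
      by blast
  next
    assume "\<exists>c. central_function ar Obj c \<and> (\<forall>A\<in>Obj. c (Fo A) \<in> iso ar (Fo A) (transport A (s A)))"
    then obtain c where c: "central_function ar Obj c"
      and c_iso: "\<forall>A\<in>Obj. c (Fo A) \<in> iso ar (Fo A) (transport A (s A))"
      by blast
    have "(\<lambda>x. inv_into (ucarrier (Fo A)) (c (Fo A)) (s A x)) \<in> iso ar A (Fo A)" if "A \<in> Obj" for A
      using iso_comp[OF s_iso iso_inv_into[OF alg]] c_iso automorphism_obj[OF aut] that by simp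
    with implements_inv_central_comp[OF aut s_impl c] show "inner ar Obj Fo Fm"
      by (auto simp: inner_def)
  qed
qed

end
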